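(* Let $\mathcal{S}=\{S_1,\dots,S_N\}\subseteq 2^{[n]}$ be a Sperner family and $h:\mathcal{S}\to 2^{[n]}$ a function with $H_i=h(S_i)\subseteq S_i$ for every $i\in[N]$. If the graph $G_{\mathcal{S},h}$ has a vertex of degree at most $1$, then there exists $S_0\in\mathcal{S}$ such that $\mathcal{Q}_{S_0,h(S_0)}\not\subseteq\bigcup_{S\in\mathcal{S}\setminus\{S_0\}}\mathcal{Q}_{S,h(S)}$.
   Context: $[n]=\{1,\dots,n\}$. A Sperner family is a family of sets none of which is contained in another. For $H\subseteq S\subseteq[n]$, $\mathcal{Q}_{S,H}=\{H\cup B: B\subseteq[n]\setminus S\}$. The graph $G_{\mathcal{S},h}$ has vertex set $\{(S_i,H_i): i\in[N]\}$, and two distinct vertices $(S_i,H_i)$, $(S_j,H_j)$ are adjacent if and only if $S_i\cap H_j=S_j\cap H_i$. *)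

theory Defs
  imports Main
begin

definition sperner :: "'a set set \<Rightarrow> bool" where
  "sperner F \<longleftrightarrow> (\<forall>A\<in>F. \<forall>B\<in>F. A \<subseteq> B \<longrightarrow> A = B)"

definition Q :: "nat \<Rightarrow> nat set \<Rightarrow> nat set \<Rightarrow> nat set set" where
  "Q n S H = {H \<union> B | B. B \<subseteq> {1..n} - S}"

text \<open>Adjacency in G_{S,h}: distinct vertices (S,h S), (T,h T) adjacent iff
  S \<inter> h T = T \<inter> h S. Vertices are indexed by the members of the family.\<close>
definition adj :: "(nat set \<Rightarrow> nat set) \<Rightarrow> nat set \<Rightarrow> nat set \<Rightarrow> bool" where
  "adj h S T \<longleftrightarrow> S \<noteq> T \<and> S \<inter> h T = T \<inter> h S"

definition degree :: "nat set set \<Rightarrow> (nat set \<Rightarrow> nat set) \<Rightarrow> nat set \<Rightarrow> nat" where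
  "degree F h S = card {T \<in> F. adj h S T}"

end

theory Submission
  imports Defs
begin

text \<open>Let \<open>S\<^sub>0\<close> have degree at most one. Every set \<open>X\<close> lying in both
  \<open>Q(S\<^sub>0, h S\<^sub>0)\<close> and \<open>Q(T, h T)\<close> satisfies \<open>X \<inter> S\<^sub>0 = h S\<^sub>0\<close> and
  \<open>X \<inter> T = h T\<close>, so \<open>T\<close> is adjacent to \<open>S\<^sub>0\<close>. If \<open>Q(S\<^sub>0, h S\<^sub>0)\<close> were covered
  by the other cubes, its smallest element \<open>h S\<^sub>0\<close> and its largest element
  \<open>h S\<^sub>0 \<union> ([n] - S\<^sub>0)\<close> would lie in cubes of neighbours of \<open>S\<^sub>0\<close>, hence in the
  cube of one and the same \<open>T\<close>. Then \<open>T\<close> misses \<open>[n] - S\<^sub>0\<close>, i.e. \<open>T \<subseteq> S\<^sub>0\<close>,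
  contradicting the Sperner property.\<close>

lemma Q_Int_eq:
  assumes "H \<subseteq> T" "X \<in> Q n T H"
  shows "X \<inter> T = H"
  using assms unfolding Q_def by blast

lemma Q_bottom: "H \<in> Q n S H"
  unfolding Q_def by blast

lemma Q_top: "H \<union> ({1..n} - S) \<in> Q n S H"
  unfolding Q_def by blast

lemma Q_diff_disjoint:
  assumes "H \<subseteq> T" "X \<in> Q n T H" "Y \<in> Q n T H"
  shows "(Y - X) \<inter> T = {}"
  using Q_Int_eq[OF assms(1,2)] Q_Int_eq[OF assms(1,3)] by blast

lemma adj_if_Q_common:
  assumes "h S \<subseteq> S" "h T \<subseteq> T" "S \<noteq> T"
    and "X \<in> Q n S (h S)" "X \<in> Q n T (h T)"
  shows "adj h S T"
  using Q_Int_eq[OF assms(1,4)] Q_Int_eq[OF assms(2,5)] assms(3)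
  unfolding adj_def by blast

lemma degree_le_1_neighbour_unique:
  assumes "finite F" "degree F h S \<le> 1"
    and "T1 \<in> F" "adj h S T1" "T2 \<in> F" "adj h S T2"
  shows "T1 = T2"
  using assms card_le_Suc0_iff_eq[of "{T \<in> F. adj h S T}"]
  unfolding degree_def by auto

lemma subset_if_Q_bottom_top:
  assumes "T \<subseteq> {1..n}" "K \<subseteq> T" "H \<subseteq> S"
    and "H \<in> Q n T K" "H \<union> ({1..n} - S) \<in> Q n T K"
  shows "T \<subseteq> S"
proof -
  have "({1..n} - S) \<inter> T = {}"
    using Q_diff_disjoint[OF assms(2,4,5)] assms(3) by blast
  then show ?thesis using assms(1) by blast
qed

theorem claim19:
  fixes n :: nat and F :: "nat set set" and h :: "nat set \<Rightarrow> nat set"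
  assumes "F \<subseteq> Pow {1..n}"
    and "sperner F"
    and "\<And>S. S \<in> F \<Longrightarrow> h S \<subseteq> S"
    and "\<exists>S\<in>F. degree F h S \<le> 1"
  shows "\<exists>S0\<in>F. \<not> (Q n S0 (h S0) \<subseteq> (\<Union>S\<in>F - {S0}. Q n S (h S)))"
proof -
  obtain S0 where S0: "S0 \<in> F" "degree F h S0 \<le> 1" using assms(4) by blast
  have "finite F" using assms(1) by (rule finite_subset) simp
  have "\<not> Q n S0 (h S0) \<subseteq> (\<Union>S\<in>F - {S0}. Q n S (h S))"
  proof
    assume cover: "Q n S0 (h S0) \<subseteq> (\<Union>S\<in>F - {S0}. Q n S (h S))"
    obtain T1 where T1: "T1 \<in> F" "T1 \<noteq> S0" "h S0 \<in> Q n T1 (h T1)"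
      using cover Q_bottom[of "h S0" n S0] by blast
    obtain T2 where T2: "T2 \<in> F" "T2 \<noteq> S0" "h S0 \<union> ({1..n} - S0) \<in> Q n T2 (h T2)"
      using cover Q_top[of "h S0" n S0] by blast
    have hS0: "h S0 \<subseteq> S0" using assms(3) S0(1) .
    have "adj h S0 T1"
      by (rule adj_if_Q_common[OF hS0 assms(3)[OF T1(1)] T1(2)[symmetric] Q_bottom T1(3)])
    moreover have "adj h S0 T2"
      by (rule adj_if_Q_common[OF hS0 assms(3)[OF T2(1)] T2(2)[symmetric] Q_top T2(3)])
    ultimately have "T1 = T2"
      using degree_le_1_neighbour_unique[OF \<open>finite F\<close> S0(2)] T1(1) T2(1) by blast
    have "T1 \<subseteq> {1..n}" using assms(1) T1(1) by blast
    from subset_if_Q_bottom_top[OF this assms(3)[OF T1(1)] hS0 T1(3)]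
    have "T1 \<subseteq> S0" using T2(3) \<open>T1 = T2\<close> by blast
    then show False using assms(2) S0(1) T1(1,2) unfolding sperner_def by blast
  qed
  then show ?thesis using S0(1) by blast
qed

end
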